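(* Let $X$ and $Y$ be compact metric spaces and $G_{X}$ and $G_{Y}$ closed subgroups of $\mathrm{Isom}(X)$ and $\mathrm{Isom}(Y)$ respectively. An $\epsilon$-equivariant approximation $(f,\theta,\psi)$ between $(X,G_{X})$ and $(Y,G_{Y})$ induces an $\tilde{\epsilon}$-equivariant approximation $(f_{\#},\theta_{\#},\psi_{\#})$ between $(\mathbb{P}_2(X),G_{X}^{\#})$ and $(\mathbb{P}_2(Y),G_{Y}^{\#})$, where $\tilde{\epsilon}$ tends to $0$ as $\epsilon$ tends to $0$.
   Context: $\mathrm{Isom}(X)$ denotes the isometry group of $X$. $\mathbb{P}_2(X)$ is the Wasserstein space over $X$ with the $2$-Wasserstein metric. For a closed subgroup $G$ of $\mathrm{Isom}(X)$, $G^{\#}$ is the induced subgroup of $\mathrm{Isom}(\mathbb{P}_2(X))$ consisting of push-forwards $g_{\#}$. An $\epsilon$-equivariant approximation $(f\colon X\to Y,\theta\colon G_X\to G_Y,\psi\colon G_Y\to G_X)$ is in Fukaya's sense (f is an $\epsilon$-Gromov--Hausdorff approximation and $d(\theta(g)f(x),f(gx))\le\epsilon$, $d(\psi(\lambda)x, \dots)$ similarly); maps may be taken measurable. Here $\theta_{\#}(g_{\#})=(\theta(g))_{\#}$ and $\psi_{\#}(\lambda_{\#})=(\psi(\lambda))_{\#}$, and one may take $\tilde\epsilon=6\epsilon+\sqrt{\epsilon(2\,\mathrm{diam}(Y)+\epsilon)}$. *)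

theory Defs
  imports "HOL-Probability.Probability"
begin

definition Isom :: "('a::metric_space \<Rightarrow> 'a) set" where
  "Isom = {g. bij g \<and> (\<forall>x y. dist (g x) (g y) = dist x y)}"

text \<open>Closed subgroup of the isometry group; the topology on Isom(X) of a compact
  metric space X is the compact-open topology = topology of uniform convergence.\<close>
definition closed_isom_subgroup :: "('a::metric_space \<Rightarrow> 'a) set \<Rightarrow> bool" where
  "closed_isom_subgroup G \<longleftrightarrow>
     G \<subseteq> Isom \<and> id \<in> G \<and> (\<forall>g\<in>G. \<forall>h\<in>G. g \<circ> h \<in> G) \<and> (\<forall>g\<in>G. inv g \<in> G) \<and>
     (\<forall>s g. (\<forall>n. s n \<in> G) \<and> uniform_limit UNIV s g sequentially \<longrightarrow> g \<in> G)"

text \<open>Borel probability measures; on a compact space every such measure has finite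
  second moment, so this is the underlying set of P_2(X).\<close>
definition P2 :: "'a::metric_space measure set" where
  "P2 = {\<mu>. prob_space \<mu> \<and> sets \<mu> = sets (borel :: 'a measure)}"

definition couplings :: "'a::metric_space measure \<Rightarrow> 'a measure \<Rightarrow> ('a \<times> 'a) measure set" where
  "couplings \<mu> \<nu> = {\<pi>. sets \<pi> = sets (borel :: ('a \<times> 'a) measure) \<and>
                        distr \<pi> borel fst = \<mu> \<and> distr \<pi> borel snd = \<nu>}"

definition W2 :: "'a::metric_space measure \<Rightarrow> 'a measure \<Rightarrow> real" where
  "W2 \<mu> \<nu> = sqrt (INF \<pi>\<in>couplings \<mu> \<nu>. \<integral>p. (dist (fst p) (snd p))\<^sup>2 \<partial>\<pi>)"

definition push :: "('a::topological_space \<Rightarrow> 'b::topological_space) \<Rightarrow> 'a measure \<Rightarrow> 'b measure" where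
  "push f \<mu> = distr \<mu> borel f"

definition induced_group :: "('a::metric_space \<Rightarrow> 'a) set \<Rightarrow> ('a measure \<Rightarrow> 'a measure) set" where
  "induced_group G = push ` G"

definition induced_hom ::
  "('a::metric_space \<Rightarrow> 'a) set \<Rightarrow> (('a \<Rightarrow> 'a) \<Rightarrow> ('b::metric_space \<Rightarrow> 'b))
     \<Rightarrow> ('a measure \<Rightarrow> 'a measure) \<Rightarrow> ('b measure \<Rightarrow> 'b measure)" where
  "induced_hom G \<theta> h = push (\<theta> (SOME g. g \<in> G \<and> push g = h))"

definition equivariant_approx ::
  "('a \<Rightarrow> 'a \<Rightarrow> real) \<Rightarrow> 'a set \<Rightarrow> ('a \<Rightarrow> 'a) set \<Rightarrow>
   ('b \<Rightarrow> 'b \<Rightarrow> real) \<Rightarrow> 'b set \<Rightarrow> ('b \<Rightarrow> 'b) set \<Rightarrow>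
   ('a \<Rightarrow> 'b) \<Rightarrow> (('a \<Rightarrow> 'a) \<Rightarrow> ('b \<Rightarrow> 'b)) \<Rightarrow> (('b \<Rightarrow> 'b) \<Rightarrow> ('a \<Rightarrow> 'a)) \<Rightarrow> real \<Rightarrow> bool" where
  "equivariant_approx dX X GX dY Y GY f \<theta> \<psi> \<epsilon> \<longleftrightarrow>
     f ` X \<subseteq> Y \<and> \<theta> ` GX \<subseteq> GY \<and> \<psi> ` GY \<subseteq> GX \<and>
     (\<forall>x\<in>X. \<forall>x'\<in>X. \<bar>dY (f x) (f x') - dX x x'\<bar> \<le> \<epsilon>) \<and>
     (\<forall>y\<in>Y. \<exists>x\<in>X. dY (f x) y \<le> \<epsilon>) \<and>
     (\<forall>g\<in>GX. \<forall>x\<in>X. dY (\<theta> g (f x)) (f (g x)) \<le> \<epsilon>) \<and>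
     (\<forall>l\<in>GY. \<forall>x\<in>X. dY (l (f x)) (f (\<psi> l x)) \<le> \<epsilon>)"

end

theory Submission
  imports Defs
begin

text \<open>Push-forward along an \<open>\<epsilon>\<close>-isometry \<open>f\<close> changes squared transport costs only by
  \<open>O(\<epsilon>)\<close>. A coupling of \<open>\<mu>, \<nu>\<close> is simply pushed along \<open>f \<times> f\<close>. Conversely, a coupling of
  \<open>f\<^sub>#\<mu>, f\<^sub>#\<nu>\<close> is pulled back after quantising \<open>Y\<close> by a finite \<open>\<epsilon>\<close>-net: the block density
  with respect to \<open>\<mu> \<otimes> \<nu>\<close> that is constant on pairs of net cells couples \<open>\<mu>\<close> and \<open>\<nu>\<close> and puts
  the same mass on every pair of cells, so both couplings have the same quantised cost.
  Almost surjectivity of \<open>f\<^sub>#\<close> comes from pushing \<open>\<nu>\<close> along a measurable approximate inverse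
  of \<open>f\<close> that is constant on net cells, and the equivariance estimates from the coupling
  \<open>(\<theta> g \<circ> f, f \<circ> g)\<^sub>#\<mu>\<close>.\<close>

section \<open>Compact metric spaces\<close>

lemma compact_metric_countable_basis:
  assumes "compact (UNIV :: 'a::metric_space set)"
  shows "\<exists>B :: 'a set set. countable B \<and> topological_basis B"
proof -
  have "\<forall>n::nat. \<exists>K. finite K \<and> (UNIV::'a set) \<subseteq> (\<Union>x\<in>K. ball x (1 / Suc n))"
    using seq_compact_imp_totally_bounded[OF compact_imp_seq_compact[OF assms]] by simp
  then obtain K where K: "\<And>n. finite (K n)" "\<And>n. (UNIV::'a set) \<subseteq> (\<Union>x\<in>K n. ball x (1 / Suc n))"
    by metis
  define B where "B = (\<Union>n. (\<lambda>x. ball x (1 / Suc n)) ` K n)"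
  have "countable B"
    unfolding B_def using K(1) by (intro countable_UN) (auto intro: countable_finite)
  moreover have "topological_basis B"
  proof (rule topological_basisI)
    fix U :: "'a set" assume "U \<in> B" then show "open U" by (auto simp: B_def)
  next
    fix U :: "'a set" and x assume "open U" "x \<in> U"
    then obtain e where e: "e > 0" "ball x e \<subseteq> U" by (meson open_contains_ball)
    obtain n :: nat where n: "1 / real (Suc n) < e / 2"
      using e by (metis half_gt_zero_iff nat_approx_posE)
    obtain c where c: "c \<in> K n" "x \<in> ball c (1 / Suc n)" using K(2)[of n] by blast
    have "ball c (1 / Suc n) \<subseteq> U"
    proof
      fix z assume "z \<in> ball c (1 / Suc n)"
      then have "dist x z < e" using c n dist_triangle[of x z c] by (simp add: dist_commute)
      then show "z \<in> U" using e by auto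
    qed
    then show "\<exists>B'\<in>B. x \<in> B' \<and> B' \<subseteq> U" using c by (auto simp: B_def)
  qed
  ultimately show ?thesis by (intro exI[of _ B] conjI)
qed

lemma sets_borel_prod_compact:
  assumes "compact (UNIV :: 'a::metric_space set)" "compact (UNIV :: 'b::metric_space set)"
  shows "sets (borel :: ('a \<times> 'b) measure) = sets (borel \<Otimes>\<^sub>M borel)"
proof
  obtain BA :: "'a set set" where A: "countable BA" "topological_basis BA"
    using compact_metric_countable_basis[OF assms(1)] by blast
  obtain BB :: "'b set set" where B: "countable BB" "topological_basis BB"
    using compact_metric_countable_basis[OF assms(2)] by blast
  let ?P = "(\<lambda>(a, b). a \<times> b) ` (BA \<times> BB)"
  have "borel = sigma UNIV ?P"
    by (rule borel_eq_countable_basis) (use A B in \<open>auto intro: topological_basis_prod\<close>)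
  moreover have "sets (sigma UNIV ?P) \<subseteq> sets (borel \<Otimes>\<^sub>M borel)"
  proof (rule sigma_le_sets[THEN iffD2], safe)
    show "UNIV \<in> sets (borel \<Otimes>\<^sub>M borel)"
      by (metis sets.top space_borel space_pair_measure UNIV_Times_UNIV)
    fix a b assume "a \<in> BA" "b \<in> BB"
    then show "a \<times> b \<in> sets (borel \<Otimes>\<^sub>M borel)"
      using A(2) B(2) by (intro pair_measureI) (auto simp: topological_basis_open)
  qed auto
  ultimately show "sets (borel :: ('a \<times> 'b) measure) \<subseteq> sets (borel \<Otimes>\<^sub>M borel)" by simp
next
  have "(\<lambda>x. (fst x, snd x)) \<in> measurable (borel :: ('a \<times> 'b) measure) (borel \<Otimes>\<^sub>M borel)"
    by (intro measurable_Pair borel_measurable_continuous_onI continuous_intros)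
  then have "id \<in> measurable (borel :: ('a \<times> 'b) measure) (borel \<Otimes>\<^sub>M borel)"
    by (simp add: id_def)
  then show "sets (borel \<Otimes>\<^sub>M borel) \<subseteq> sets (borel :: ('a \<times> 'b) measure)"
    by (metis measurable_sets space_borel subsetI vimage_id Int_UNIV_right id_apply)
qed

lemma fst_snd_borel_measurable:
  "fst \<in> borel_measurable (borel :: ('a::topological_space \<times> 'b::topological_space) measure)"
  "snd \<in> borel_measurable (borel :: ('a::topological_space \<times> 'b::topological_space) measure)"
  by (rule borel_measurable_continuous_onI, intro continuous_intros)+

lemma borel_measurable_Pair_compact:
  fixes a :: "'c \<Rightarrow> 'a::metric_space" and b :: "'c \<Rightarrow> 'b::metric_space"
  assumes "compact (UNIV :: 'a set)" "compact (UNIV :: 'b set)"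
    and "a \<in> borel_measurable M" "b \<in> borel_measurable M"
  shows "(\<lambda>x. (a x, b x)) \<in> borel_measurable M"
  using measurable_Pair[OF assms(3,4)]
  unfolding measurable_cong_sets[OF refl sets_borel_prod_compact[OF assms(1,2)]] .

lemma borel_measurable_dist_compact:
  fixes a b :: "'c \<Rightarrow> 'a::metric_space"
  assumes "compact (UNIV :: 'a set)" "a \<in> borel_measurable M" "b \<in> borel_measurable M"
  shows "(\<lambda>x. dist (a x) (b x)) \<in> borel_measurable M"
proof -
  have "(\<lambda>p::'a \<times> 'a. dist (fst p) (snd p)) \<in> borel_measurable borel"
    by (intro borel_measurable_continuous_onI continuous_intros)
  from measurable_comp[OF borel_measurable_Pair_compact[OF assms(1,1,2,3)] this]
  show ?thesis by (simp add: comp_def)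
qed

lemma compact_metric_net_index:
  assumes "compact (UNIV :: 'a::metric_space set)" "0 < r"
  obtains k :: "'a::metric_space \<Rightarrow> nat" and n :: nat and c :: "nat \<Rightarrow> 'a"
  where "\<And>y. k y < n" "\<And>y. dist y (c (k y)) < r" "k \<in> measurable borel (count_space UNIV)"
proof -
  have "\<exists>K. finite K \<and> K \<subseteq> UNIV \<and> (UNIV::'a set) \<subseteq> (\<Union>x\<in>K. ball x r)"
    by (rule seq_compact_imp_totally_bounded[OF compact_imp_seq_compact[OF assms(1)], rule_format, OF assms(2)])
  then obtain K where K: "finite K" "(UNIV::'a set) \<subseteq> (\<Union>x\<in>K. ball x r)"
    by blast
  obtain n :: nat and c where Kc: "K = c ` {i. i < n}"
    using finite_conv_nat_seg_image[THEN iffD1, OF K(1)] by blast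
  define k where "k y = (LEAST i. i < n \<and> dist y (c i) < r)" for y
  have "\<exists>i. i < n \<and> dist y (c i) < r" for y
  proof -
    obtain x where "x \<in> K" "y \<in> ball x r" using K(2) by blast
    then show ?thesis using Kc by (auto simp: dist_commute)
  qed
  then have k: "k y < n \<and> dist y (c (k y)) < r" for y
    unfolding k_def by (rule LeastI_ex)
  have "k \<in> measurable borel (count_space UNIV)"
    unfolding k_def
  proof (rule measurable_Least)
    fix i
    have "{y \<in> space borel. i < n \<and> dist y (c i) < r} = (if i < n then ball (c i) r else {})"
      by (auto simp: ball_def dist_commute)
    then show "(\<lambda>y. i < n \<and> dist y (c i) < r) \<in> measurable borel (count_space UNIV)"
      by (simp only: pred_def) simp
  qed
  with k show ?thesis by (intro that[of k n c]) simp_all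
qed

lemma compact_metric_dist_bounded:
  assumes "compact (UNIV :: 'a::metric_space set)"
  obtains D where "\<And>x y :: 'a::metric_space. dist x y \<le> D"
proof -
  from bounded_two_points[THEN iffD1, OF compact_imp_bounded[OF assms]]
  obtain D where "\<forall>x\<in>(UNIV::'a set). \<forall>y\<in>UNIV. dist x y \<le> D" by blast
  then show ?thesis using that by blast
qed

lemma Isom_borel_measurable:
  assumes "g \<in> Isom"
  shows "g \<in> borel_measurable borel"
proof (rule borel_measurable_continuous_onI)
  have "dist (g x) (g y) = dist x y" for x y using assms by (simp add: Isom_def)
  then show "continuous_on UNIV g"
    unfolding continuous_on_iff by (intro ballI allI impI exI[of _ "_ :: real"]) auto
qed

section \<open>Measures constant on the cells of a finite partition\<close>

lemma measure_eq_sum_level_sets: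
  fixes h :: "'a \<Rightarrow> nat"
  assumes "finite_measure M" and h: "h \<in> measurable M (count_space UNIV)"
    and "\<And>x. x \<in> space M \<Longrightarrow> h x < n" and S: "S \<in> sets M"
  shows "measure M S = (\<Sum>i<n. measure M (S \<inter> {x\<in>space M. h x = i}))"
proof -
  have "S = (\<Union>i<n. S \<inter> {x\<in>space M. h x = i})"
    using sets.sets_into_space[OF S] assms(3) by auto
  moreover have "measure M (\<Union>i<n. S \<inter> {x\<in>space M. h x = i}) =
      (\<Sum>i<n. measure M (S \<inter> {x\<in>space M. h x = i}))"
    using S h finite_measure.emeasure_finite[OF assms(1)]
    by (intro measure_finite_Union) (auto simp: disjoint_family_on_def)
  ultimately show ?thesis by simp
qed

lemma integral_indicator_cell_function:
  fixes h1 h2 :: "'a \<Rightarrow> nat" and G :: "nat \<Rightarrow> nat \<Rightarrow> real"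
  assumes "finite_measure M"
    and h1: "h1 \<in> measurable M (count_space UNIV)" and h2: "h2 \<in> measurable M (count_space UNIV)"
    and hn: "\<And>x. x \<in> space M \<Longrightarrow> h1 x < n \<and> h2 x < n" and S: "S \<in> sets M"
  shows "(\<integral>x. indicator S x * G (h1 x) (h2 x) \<partial>M) =
         (\<Sum>i<n. \<Sum>j<n. G i j * measure M (S \<inter> {x\<in>space M. h1 x = i \<and> h2 x = j}))"
proof -
  let ?T = "\<lambda>i j. S \<inter> {x\<in>space M. h1 x = i \<and> h2 x = j}"
  have T: "?T i j \<in> sets M" for i j
    using S h1 h2 by measurable
  have "(\<integral>x. indicator S x * G (h1 x) (h2 x) \<partial>M) =
      (\<integral>x. (\<Sum>i<n. \<Sum>j<n. G i j * indicator (?T i j) x) \<partial>M)"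
  proof (rule Bochner_Integration.integral_cong[OF refl])
    fix x assume x: "x \<in> space M"
    have "(\<Sum>i<n. \<Sum>j<n. G i j * indicator (?T i j) x) =
        (\<Sum>i<n. if i = h1 x then (\<Sum>j<n. if j = h2 x then G i j * indicator S x else 0) else 0)"
      using x by (intro sum.cong refl) (auto simp: indicator_def intro!: sum.neutral)
    then show "indicator S x * G (h1 x) (h2 x) = (\<Sum>i<n. \<Sum>j<n. G i j * indicator (?T i j) x)"
      using hn[OF x] by simp
  qed
  also have "\<dots> = (\<Sum>i<n. \<Sum>j<n. \<integral>x. G i j * indicator (?T i j) x \<partial>M)"
  proof -
    have "integrable M (\<lambda>x. G i j * indicator (?T i j) x)" for i j
      using T finite_measure.emeasure_finite[OF assms(1)]
      by (intro integrable_mult_right integrable_real_indicator) (auto simp: top.not_eq_extremum)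
    then show ?thesis
      by (simp only: Bochner_Integration.integral_sum Bochner_Integration.integrable_sum)
  qed
  also have "\<dots> = (\<Sum>i<n. \<Sum>j<n. G i j * measure M (?T i j))"
    using T by simp
  finally show ?thesis .
qed

lemma integral_cell_function_eq:
  fixes h1 h2 :: "'a \<Rightarrow> nat" and g1 g2 :: "'b \<Rightarrow> nat" and G :: "nat \<Rightarrow> nat \<Rightarrow> real"
  assumes "finite_measure M" "finite_measure N"
    and "h1 \<in> measurable M (count_space UNIV)" "h2 \<in> measurable M (count_space UNIV)"
    and "g1 \<in> measurable N (count_space UNIV)" "g2 \<in> measurable N (count_space UNIV)"
    and "\<And>x. x \<in> space M \<Longrightarrow> h1 x < n \<and> h2 x < n"
    and "\<And>y. y \<in> space N \<Longrightarrow> g1 y < n \<and> g2 y < n"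
    and "\<And>i j. i < n \<Longrightarrow> j < n \<Longrightarrow>
      measure M {x\<in>space M. h1 x = i \<and> h2 x = j} = measure N {y\<in>space N. g1 y = i \<and> g2 y = j}"
  shows "(\<integral>x. G (h1 x) (h2 x) \<partial>M) = (\<integral>y. G (g1 y) (g2 y) \<partial>N)"
proof -
  have "(\<integral>x. G (h1 x) (h2 x) \<partial>M) = (\<integral>x. indicator (space M) x * G (h1 x) (h2 x) \<partial>M)"
    by (intro Bochner_Integration.integral_cong) auto
  also have "\<dots> = (\<Sum>i<n. \<Sum>j<n. G i j * measure M {x\<in>space M. h1 x = i \<and> h2 x = j})"
    using integral_indicator_cell_function[OF assms(1,3,4,7)] by (simp add: Int_absorb1)
  also have "\<dots> = (\<Sum>i<n. \<Sum>j<n. G i j * measure N {y\<in>space N. g1 y = i \<and> g2 y = j})"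
    using assms(9) by simp
  also have "\<dots> = (\<integral>y. indicator (space N) y * G (g1 y) (g2 y) \<partial>N)"
    using integral_indicator_cell_function[OF assms(2,5,6,8)] by (simp add: Int_absorb1)
  also have "\<dots> = (\<integral>y. G (g1 y) (g2 y) \<partial>N)"
    by (intro Bochner_Integration.integral_cong) auto
  finally show ?thesis .
qed

lemma (in prob_space) integral_le_integral_add_const:
  fixes \<phi> \<psi> :: "'a \<Rightarrow> real"
  assumes "integrable M \<phi>" "integrable M \<psi>" "\<And>x. x \<in> space M \<Longrightarrow> \<phi> x \<le> \<psi> x + c"
  shows "(\<integral>x. \<phi> x \<partial>M) \<le> (\<integral>x. \<psi> x \<partial>M) + c"
proof -
  have "(\<integral>x. \<phi> x \<partial>M) \<le> (\<integral>x. \<psi> x + c \<partial>M)"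
    using assms by (intro integral_mono) auto
  also have "\<dots> = (\<integral>x. \<psi> x \<partial>M) + c"
    using assms(2) prob_space by simp
  finally show ?thesis .
qed

lemma borel_measurable_cell_function:
  fixes h1 h2 :: "'a \<Rightarrow> nat" and G :: "nat \<Rightarrow> nat \<Rightarrow> real"
  assumes "h1 \<in> measurable M (count_space UNIV)" "h2 \<in> measurable M (count_space UNIV)"
  shows "(\<lambda>x. G (h1 x) (h2 x)) \<in> borel_measurable M"
  by (rule measurable_compose_countable[where f="\<lambda>i x. G i (h2 x)", OF _ assms(1)],
      rule measurable_compose_countable[where f="\<lambda>j x. G i j" for i, OF _ assms(2)]) simp

lemma integrable_cell_function:
  fixes h1 h2 :: "'a \<Rightarrow> nat" and G :: "nat \<Rightarrow> nat \<Rightarrow> real"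
  assumes "finite_measure M"
    and h1: "h1 \<in> measurable M (count_space UNIV)" and h2: "h2 \<in> measurable M (count_space UNIV)"
    and hn: "\<And>x. x \<in> space M \<Longrightarrow> h1 x < n \<and> h2 x < n"
  shows "integrable M (\<lambda>x. G (h1 x) (h2 x))"
proof (rule finite_measure.integrable_const_bound[OF assms(1), where B="\<Sum>i<n. \<Sum>j<n. \<bar>G i j\<bar>"])
  have "\<bar>G (h1 x) (h2 x)\<bar> \<le> (\<Sum>i<n. \<Sum>j<n. \<bar>G i j\<bar>)" if "x \<in> space M" for x
  proof -
    have "\<bar>G (h1 x) (h2 x)\<bar> \<le> (\<Sum>j<n. \<bar>G (h1 x) j\<bar>)"
      using hn[OF that] by (intro member_le_sum) auto
    also have "\<dots> \<le> (\<Sum>i<n. \<Sum>j<n. \<bar>G i j\<bar>)"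
      using hn[OF that] by (intro member_le_sum[where f="\<lambda>i. \<Sum>j<n. \<bar>G i j\<bar>"] sum_nonneg) auto
    finally show ?thesis .
  qed
  then show "AE x in M. norm (G (h1 x) (h2 x)) \<le> (\<Sum>i<n. \<Sum>j<n. \<bar>G i j\<bar>)"
    by auto
  show "(\<lambda>x. G (h1 x) (h2 x)) \<in> borel_measurable M"
    by (rule borel_measurable_cell_function[OF h1 h2])
qed

lemma sum_level_sets_weighted:
  fixes h :: "'a \<Rightarrow> nat" and w :: "nat \<Rightarrow> real"
  assumes "finite_measure M" "h \<in> measurable M (count_space UNIV)"
    and "\<And>x. x \<in> space M \<Longrightarrow> h x < n" and E: "E \<in> sets M"
    and w: "\<And>i. i < n \<Longrightarrow> measure M {x\<in>space M. h x = i} \<noteq> 0 \<Longrightarrow> w i = 1"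
  shows "(\<Sum>i<n. w i * measure M (E \<inter> {x\<in>space M. h x = i})) = measure M E"
proof -
  have "w i * measure M (E \<inter> {x\<in>space M. h x = i}) = measure M (E \<inter> {x\<in>space M. h x = i})"
    if "i < n" for i
  proof (cases "measure M {x\<in>space M. h x = i} = 0")
    case True
    have "measure M (E \<inter> {x\<in>space M. h x = i}) \<le> measure M {x\<in>space M. h x = i}"
      using assms(2) by (intro finite_measure.finite_measure_mono[OF assms(1)]) measurable
    then show ?thesis using True measure_nonneg[of M] by (metis order_antisym mult_zero_right)
  next
    case False
    then show ?thesis using w[OF that] by simp
  qed
  then have "(\<Sum>i<n. w i * measure M (E \<inter> {x\<in>space M. h x = i})) =
      (\<Sum>i<n. measure M (E \<inter> {x\<in>space M. h x = i}))"
    by (intro sum.cong) auto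
  then show ?thesis
    using measure_eq_sum_level_sets[OF assms(1-4)] by simp
qed

lemma sum_divide_mult_eq_1:
  fixes P b :: "nat \<Rightarrow> real"
  assumes "(\<Sum>j<n. P j) = a" "a \<noteq> 0" "\<And>j. j < n \<Longrightarrow> b j = 0 \<Longrightarrow> P j = 0"
  shows "(\<Sum>j<n. P j / (a * b j) * b j) = 1"
proof -
  have "(\<Sum>j<n. P j / (a * b j) * b j) = (\<Sum>j<n. P j / a)"
    using assms(3) by (intro sum.cong) auto
  also have "\<dots> = 1"
    using assms(1,2) by (simp add: sum_divide_distrib[symmetric])
  finally show ?thesis .
qed

lemma emeasure_block_density_Times:
  fixes h1 :: "'a \<Rightarrow> nat" and h2 :: "'b \<Rightarrow> nat" and c :: "nat \<Rightarrow> nat \<Rightarrow> real"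
  assumes "prob_space M" "prob_space N"
    and h1: "h1 \<in> measurable M (count_space UNIV)" and h2: "h2 \<in> measurable N (count_space UNIV)"
    and h1n: "\<And>x. x \<in> space M \<Longrightarrow> h1 x < n" and h2n: "\<And>y. y \<in> space N \<Longrightarrow> h2 y < n"
    and c: "\<And>i j. 0 \<le> c i j" and E: "E \<in> sets M" and F: "F \<in> sets N"
  shows "emeasure (density (M \<Otimes>\<^sub>M N) (\<lambda>q. ennreal (c (h1 (fst q)) (h2 (snd q))))) (E \<times> F) =
    ennreal (\<Sum>i<n. \<Sum>j<n. c i j * measure M (E \<inter> {x\<in>space M. h1 x = i}) *
                             measure N (F \<inter> {y\<in>space N. h2 y = j}))"
proof -
  interpret M: prob_space M by fact
  interpret N: prob_space N by fact
  interpret pair_prob_space M N ..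
  let ?\<rho> = "\<lambda>q. c (h1 (fst q)) (h2 (snd q))"
  have h1': "(\<lambda>q. h1 (fst q)) \<in> measurable (M \<Otimes>\<^sub>M N) (count_space UNIV)"
    using measurable_comp[OF measurable_fst h1] by (simp add: comp_def)
  have h2': "(\<lambda>q. h2 (snd q)) \<in> measurable (M \<Otimes>\<^sub>M N) (count_space UNIV)"
    using measurable_comp[OF measurable_snd h2] by (simp add: comp_def)
  have \<rho>: "?\<rho> \<in> borel_measurable (M \<Otimes>\<^sub>M N)"
    by (rule borel_measurable_cell_function[OF h1' h2'])
  have EF: "E \<times> F \<in> sets (M \<Otimes>\<^sub>M N)"
    using E F by simp
  have "integrable (M \<Otimes>\<^sub>M N) ?\<rho>"
    using h1n h2n
    by (intro integrable_cell_function[OF P.finite_measure_axioms h1' h2']) (auto simp: space_pair_measure)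
  then have int: "integrable (M \<Otimes>\<^sub>M N) (\<lambda>q. indicator (E \<times> F) q * ?\<rho> q)"
    by (subst mult.commute) (rule integrable_real_mult_indicator[OF EF])
  have "emeasure (density (M \<Otimes>\<^sub>M N) (\<lambda>q. ennreal (?\<rho> q))) (E \<times> F) =
      (\<integral>\<^sup>+q. ennreal (indicator (E \<times> F) q * ?\<rho> q) \<partial>(M \<Otimes>\<^sub>M N))"
    using \<rho> EF by (subst emeasure_density) (auto intro!: nn_integral_cong split: split_indicator)
  also have "\<dots> = ennreal (\<integral>q. indicator (E \<times> F) q * ?\<rho> q \<partial>(M \<Otimes>\<^sub>M N))"
    using c by (intro nn_integral_eq_integral[OF int]) auto
  also have "(\<integral>q. indicator (E \<times> F) q * ?\<rho> q \<partial>(M \<Otimes>\<^sub>M N)) =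
      (\<Sum>i<n. \<Sum>j<n. c i j * measure (M \<Otimes>\<^sub>M N)
         ((E \<times> F) \<inter> {q\<in>space (M \<Otimes>\<^sub>M N). h1 (fst q) = i \<and> h2 (snd q) = j}))"
    using h1n h2n
    by (intro integral_indicator_cell_function[OF P.finite_measure_axioms h1' h2' _ EF])
      (auto simp: space_pair_measure)
  also have "\<dots> = (\<Sum>i<n. \<Sum>j<n. c i j * measure M (E \<inter> {x\<in>space M. h1 x = i}) *
                                    measure N (F \<inter> {y\<in>space N. h2 y = j}))"
  proof (intro sum.cong refl)
    fix i j
    have "(E \<times> F) \<inter> {q\<in>space (M \<Otimes>\<^sub>M N). h1 (fst q) = i \<and> h2 (snd q) = j} =
        (E \<inter> {x\<in>space M. h1 x = i}) \<times> (F \<inter> {y\<in>space N. h2 y = j})"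
      by (auto simp: space_pair_measure)
    moreover have "E \<inter> {x\<in>space M. h1 x = i} \<in> sets M" "F \<inter> {y\<in>space N. h2 y = j} \<in> sets N"
      using E F h1 h2 by measurable
    ultimately show "c i j * measure (M \<Otimes>\<^sub>M N)
        ((E \<times> F) \<inter> {q\<in>space (M \<Otimes>\<^sub>M N). h1 (fst q) = i \<and> h2 (snd q) = j}) =
      c i j * measure M (E \<inter> {x\<in>space M. h1 x = i}) * measure N (F \<inter> {y\<in>space N. h2 y = j})"
      by (simp add: measure_def N.emeasure_pair_measure_Times enn2real_mult)
  qed
  finally show ?thesis .
qed

lemma distr_fst_eqI:
  assumes "sets \<pi> = sets (M \<Otimes>\<^sub>M N)" "\<And>E. E \<in> sets M \<Longrightarrow> emeasure \<pi> (E \<times> space N) = emeasure M E"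
  shows "distr \<pi> M fst = M"
proof (rule measure_eqI)
  fix E assume "E \<in> sets (distr \<pi> M fst)"
  then have E: "E \<in> sets M" by simp
  then have "fst -` E \<inter> space \<pi> = E \<times> space N"
    using sets.sets_into_space[OF E] sets_eq_imp_space_eq[OF assms(1)] by (auto simp: space_pair_measure)
  then show "emeasure (distr \<pi> M fst) E = emeasure M E"
    using E assms by (simp add: emeasure_distr measurable_cong_sets[OF assms(1) refl])
qed simp

lemma distr_snd_eqI:
  assumes "sets \<pi> = sets (M \<Otimes>\<^sub>M N)" "\<And>F. F \<in> sets N \<Longrightarrow> emeasure \<pi> (space M \<times> F) = emeasure N F"
  shows "distr \<pi> N snd = N"
proof (rule measure_eqI)
  fix F assume "F \<in> sets (distr \<pi> N snd)"
  then have F: "F \<in> sets N" by simp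
  then have "snd -` F \<inter> space \<pi> = space M \<times> F"
    using sets.sets_into_space[OF F] sets_eq_imp_space_eq[OF assms(1)] by (auto simp: space_pair_measure)
  then show "emeasure (distr \<pi> N snd) F = emeasure N F"
    using F assms by (simp add: emeasure_distr measurable_cong_sets[OF assms(1) refl])
qed simp

text \<open>On null cells \<open>P\<close> vanishes, so the junk
  value \<open>x / 0 = 0\<close> does no harm.\<close>

definition block_coupling ::
  "'a measure \<Rightarrow> 'b measure \<Rightarrow> ('a \<Rightarrow> nat) \<Rightarrow> ('b \<Rightarrow> nat) \<Rightarrow> (nat \<Rightarrow> nat \<Rightarrow> real) \<Rightarrow> ('a \<times> 'b) measure"
where
  "block_coupling M N h1 h2 P = density (M \<Otimes>\<^sub>M N) (\<lambda>q. ennreal (P (h1 (fst q)) (h2 (snd q)) /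
     (measure M {x\<in>space M. h1 x = h1 (fst q)} * measure N {y\<in>space N. h2 y = h2 (snd q)})))"

lemma sets_block_coupling [simp]: "sets (block_coupling M N h1 h2 P) = sets (M \<Otimes>\<^sub>M N)"
  by (simp add: block_coupling_def)

context
  fixes M :: "'a measure" and N :: "'b measure" and h1 :: "'a \<Rightarrow> nat" and h2 :: "'b \<Rightarrow> nat"
    and n :: nat and P :: "nat \<Rightarrow> nat \<Rightarrow> real"
  assumes M: "prob_space M" and N: "prob_space N"
    and h1: "h1 \<in> measurable M (count_space UNIV)" and h2: "h2 \<in> measurable N (count_space UNIV)"
    and h1n: "\<And>x. x \<in> space M \<Longrightarrow> h1 x < n" and h2n: "\<And>y. y \<in> space N \<Longrightarrow> h2 y < n"
    and P: "\<And>i j. 0 \<le> P i j"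
    and row: "\<And>i. i < n \<Longrightarrow> (\<Sum>j<n. P i j) = measure M {x\<in>space M. h1 x = i}"
    and col: "\<And>j. j < n \<Longrightarrow> (\<Sum>i<n. P i j) = measure N {y\<in>space N. h2 y = j}"
begin

lemma block_mass_eq_0:
  assumes "i < n" "j < n" "measure M {x\<in>space M. h1 x = i} = 0 \<or> measure N {y\<in>space N. h2 y = j} = 0"
  shows "P i j = 0"
  using member_le_sum[of j "{..<n}" "P i"] member_le_sum[of i "{..<n}" "\<lambda>i. P i j"] P row col assms
  by (auto intro: antisym)

lemma emeasure_block_coupling_Times:
  assumes "E \<in> sets M" "F \<in> sets N"
  shows "emeasure (block_coupling M N h1 h2 P) (E \<times> F) =
    ennreal (\<Sum>i<n. \<Sum>j<n. P i j / (measure M {x\<in>space M. h1 x = i} * measure N {y\<in>space N. h2 y = j}) *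
      measure M (E \<inter> {x\<in>space M. h1 x = i}) * measure N (F \<inter> {y\<in>space N. h2 y = j}))"
  unfolding block_coupling_def
  by (rule emeasure_block_density_Times[OF M N h1 h2 h1n h2n _ assms])
    (auto intro!: divide_nonneg_nonneg mult_nonneg_nonneg P)

lemma block_coupling_fst: "distr (block_coupling M N h1 h2 P) M fst = M"
proof (rule distr_fst_eqI[OF sets_block_coupling])
  interpret M: prob_space M by (rule M)
  fix E assume E: "E \<in> sets M"
  let ?A = "\<lambda>i. {x\<in>space M. h1 x = i}" and ?B = "\<lambda>j. {y\<in>space N. h2 y = j}"
  have B: "?B j \<in> sets N" for j
    using h2 by measurable
  have "(\<Sum>i<n. \<Sum>j<n. P i j / (measure M (?A i) * measure N (?B j)) *
        measure M (E \<inter> ?A i) * measure N (space N \<inter> ?B j)) =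
      (\<Sum>i<n. (\<Sum>j<n. P i j / (measure M (?A i) * measure N (?B j)) * measure N (?B j)) *
        measure M (E \<inter> ?A i))"
    by (simp only: sets.Int_space_eq1[OF B] sum_distrib_left sum_distrib_right mult_ac)
  also have "\<dots> = measure M E"
    using row block_mass_eq_0
    by (intro sum_level_sets_weighted[OF M.finite_measure_axioms h1 h1n E] sum_divide_mult_eq_1) auto
  finally show "emeasure (block_coupling M N h1 h2 P) (E \<times> space N) = emeasure M E"
    using emeasure_block_coupling_Times[OF E sets.top] by (simp add: M.emeasure_eq_measure)
qed

lemma block_coupling_snd: "distr (block_coupling M N h1 h2 P) N snd = N"
proof (rule distr_snd_eqI[OF sets_block_coupling])
  interpret N: prob_space N by (rule N)
  fix F assume F: "F \<in> sets N"
  let ?A = "\<lambda>i. {x\<in>space M. h1 x = i}" and ?B = "\<lambda>j. {y\<in>space N. h2 y = j}"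
  have A: "?A i \<in> sets M" for i
    using h1 by measurable
  have "(\<Sum>i<n. \<Sum>j<n. P i j / (measure M (?A i) * measure N (?B j)) *
        measure M (space M \<inter> ?A i) * measure N (F \<inter> ?B j)) =
      (\<Sum>j<n. (\<Sum>i<n. P i j / (measure N (?B j) * measure M (?A i)) * measure M (?A i)) *
        measure N (F \<inter> ?B j))"
    by (subst sum.swap) (simp only: sets.Int_space_eq1[OF A] sum_distrib_left sum_distrib_right mult_ac)
  also have "\<dots> = measure N F"
    using col block_mass_eq_0
    by (intro sum_level_sets_weighted[OF N.finite_measure_axioms h2 h2n F] sum_divide_mult_eq_1) auto
  finally show "emeasure (block_coupling M N h1 h2 P) (space M \<times> F) = emeasure N F"
    using emeasure_block_coupling_Times[OF sets.top F] by (simp add: N.emeasure_eq_measure)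
qed

lemma measure_block_coupling_cell:
  assumes "i < n" "j < n"
  shows "measure (block_coupling M N h1 h2 P) ({x\<in>space M. h1 x = i} \<times> {y\<in>space N. h2 y = j}) = P i j"
proof -
  let ?A = "\<lambda>i. {x\<in>space M. h1 x = i}" and ?B = "\<lambda>j. {y\<in>space N. h2 y = j}"
  let ?c = "\<lambda>i j. P i j / (measure M (?A i) * measure N (?B j))"
  have "?c i' j' * measure M (?A i \<inter> ?A i') * measure N (?B j \<inter> ?B j') =
      (if j' = j then if i' = i then ?c i j * measure M (?A i) * measure N (?B j) else 0 else 0)" for i' j'
  proof -
    have "i' \<noteq> i \<Longrightarrow> ?A i \<inter> ?A i' = {}" "j' \<noteq> j \<Longrightarrow> ?B j \<inter> ?B j' = {}"
      by auto
    then show ?thesis by (cases "i' = i"; cases "j' = j") simp_all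
  qed
  moreover have "?A i \<in> sets M" "?B j \<in> sets N"
    using h1 h2 by measurable
  ultimately have "emeasure (block_coupling M N h1 h2 P) (?A i \<times> ?B j) =
      ennreal (?c i j * measure M (?A i) * measure N (?B j))"
    using emeasure_block_coupling_Times assms by simp
  also have "?c i j * measure M (?A i) * measure N (?B j) = P i j"
    using block_mass_eq_0[OF assms] by (cases "measure M (?A i) = 0 \<or> measure N (?B j) = 0") auto
  finally show ?thesis
    using P by (simp add: measure_def)
qed

end

section \<open>Couplings and the Wasserstein distance\<close>

definition quad_cost :: "('a::metric_space \<times> 'a) measure \<Rightarrow> real" where
  "quad_cost \<pi> = (\<integral>p. (dist (fst p) (snd p))\<^sup>2 \<partial>\<pi>)"

lemma W2_eq_INF_quad_cost: "W2 \<mu> \<nu> = sqrt (INF \<pi>\<in>couplings \<mu> \<nu>. quad_cost \<pi>)"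
  by (simp add: W2_def quad_cost_def)

lemma quad_cost_nonneg: "0 \<le> quad_cost \<pi>"
  unfolding quad_cost_def by (rule integral_nonneg_AE) auto

lemma bdd_below_quad_cost: "bdd_below (quad_cost ` C)"
  by (rule bdd_belowI[of _ 0]) (auto simp: quad_cost_nonneg)

lemma W2_le_quad_cost: "\<pi> \<in> couplings \<mu> \<nu> \<Longrightarrow> W2 \<mu> \<nu> \<le> sqrt (quad_cost \<pi>)"
  unfolding W2_eq_INF_quad_cost by (intro real_sqrt_le_mono cINF_lower bdd_below_quad_cost)

lemma P2_prob_space: "\<mu> \<in> P2 \<Longrightarrow> prob_space \<mu>"
  by (simp add: P2_def)

lemma sets_P2: "\<mu> \<in> P2 \<Longrightarrow> sets \<mu> = sets borel"
  by (simp add: P2_def)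

lemma space_P2: "\<mu> \<in> P2 \<Longrightarrow> space \<mu> = UNIV"
  by (metis sets_P2 sets_eq_imp_space_eq space_borel)

lemma sets_coupling: "\<pi> \<in> couplings \<mu> \<nu> \<Longrightarrow> sets \<pi> = sets borel"
  by (simp add: couplings_def)

lemma space_coupling: "\<pi> \<in> couplings \<mu> \<nu> \<Longrightarrow> space \<pi> = UNIV"
  by (metis sets_coupling sets_eq_imp_space_eq space_borel)

lemma borel_measurable_P2:
  "\<mu> \<in> P2 \<Longrightarrow> g \<in> borel_measurable borel \<Longrightarrow> g \<in> borel_measurable \<mu>"
  using measurable_cong_sets[OF sets_P2 refl] by blast

lemma fst_snd_measurable_coupling:
  assumes "\<pi> \<in> couplings \<mu> \<nu>"
  shows "fst \<in> measurable \<pi> borel" "snd \<in> measurable \<pi> borel"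
  unfolding measurable_cong_sets[OF sets_coupling[OF assms] refl]
  by (rule fst_snd_borel_measurable)+

lemma coupling_in_P2:
  assumes "\<pi> \<in> couplings \<mu> \<nu>" "\<mu> \<in> P2"
  shows "\<pi> \<in> P2"
proof -
  have "prob_space (distr \<pi> borel fst)"
    using assms by (simp add: couplings_def P2_prob_space)
  then have "prob_space \<pi>"
    by (rule prob_space_distrD[OF fst_snd_measurable_coupling(1)[OF assms(1)]])
  then show ?thesis
    using sets_coupling[OF assms(1)] by (simp add: P2_def)
qed

lemma coupling_marginal_measure:
  assumes "\<pi> \<in> couplings \<mu> \<nu>" "S \<in> sets borel"
  shows "measure \<pi> (S \<times> UNIV) = measure \<mu> S" "measure \<pi> (UNIV \<times> S) = measure \<nu> S"
proof -
  have "fst -` S \<inter> space \<pi> = S \<times> UNIV" "snd -` S \<inter> space \<pi> = UNIV \<times> S"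
    by (auto simp: space_coupling[OF assms(1)])
  then show "measure \<pi> (S \<times> UNIV) = measure \<mu> S" "measure \<pi> (UNIV \<times> S) = measure \<nu> S"
    using measure_distr[OF fst_snd_measurable_coupling(1)[OF assms(1)] assms(2)]
      measure_distr[OF fst_snd_measurable_coupling(2)[OF assms(1)] assms(2)] assms(1)
    by (simp_all add: couplings_def)
qed

lemma push_in_P2:
  assumes "f \<in> borel_measurable borel" "\<mu> \<in> P2"
  shows "push f \<mu> \<in> P2"
  using prob_space.prob_space_distr[OF P2_prob_space[OF assms(2)] borel_measurable_P2[OF assms(2,1)]]
  by (simp add: P2_def push_def)

lemma push_push:
  assumes "a \<in> borel_measurable borel" "b \<in> borel_measurable borel" "\<mu> \<in> P2"
  shows "push a (push b \<mu>) = distr \<mu> borel (\<lambda>x. a (b x))"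
  unfolding push_def using distr_distr[OF assms(1) borel_measurable_P2[OF assms(3,2)]]
  by (simp add: comp_def)

lemma pair_measure_in_couplings:
  assumes "compact (UNIV :: 'a::metric_space set)" "\<mu> \<in> P2" "\<nu> \<in> P2"
  shows "(\<mu> \<Otimes>\<^sub>M \<nu>) \<in> couplings \<mu> (\<nu> :: 'a measure)"
proof -
  interpret \<mu>: prob_space \<mu> using assms(2) by (rule P2_prob_space)
  interpret \<nu>: prob_space \<nu> using assms(3) by (rule P2_prob_space)
  interpret pair_prob_space \<mu> \<nu> ..
  have "sets (\<mu> \<Otimes>\<^sub>M \<nu>) = sets (borel :: ('a \<times> 'a) measure)"
    using sets_borel_prod_compact[OF assms(1,1)] assms(2,3)
    by (simp add: sets_P2 cong: sets_pair_measure_cong)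
  moreover have "distr (\<mu> \<Otimes>\<^sub>M \<nu>) borel fst = distr (\<mu> \<Otimes>\<^sub>M \<nu>) \<mu> fst"
    by (rule distr_cong) (simp_all add: sets_P2 assms)
  then have "distr (\<mu> \<Otimes>\<^sub>M \<nu>) borel fst = \<mu>"
    using \<nu>.distr_pair_fst by simp
  moreover have "distr (\<mu> \<Otimes>\<^sub>M \<nu>) borel snd = \<nu>"
  proof (rule measure_eqI)
    fix A assume A: "A \<in> sets (distr (\<mu> \<Otimes>\<^sub>M \<nu>) borel snd)"
    then have "snd -` A \<inter> space (\<mu> \<Otimes>\<^sub>M \<nu>) = space \<mu> \<times> A"
      by (auto simp: space_pair_measure space_P2 assms)
    moreover have "snd \<in> measurable (\<mu> \<Otimes>\<^sub>M \<nu>) borel"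
      using measurable_snd measurable_cong_sets[OF refl sets_P2[OF assms(3)]] by blast
    moreover have "emeasure (\<mu> \<Otimes>\<^sub>M \<nu>) (space \<mu> \<times> A) = emeasure \<mu> (space \<mu>) * emeasure \<nu> A"
      using A by (intro \<nu>.emeasure_pair_measure_Times) (simp_all add: sets_P2 assms(3))
    ultimately show "emeasure (distr (\<mu> \<Otimes>\<^sub>M \<nu>) borel snd) A = emeasure \<nu> A"
      using A by (simp add: emeasure_distr \<mu>.emeasure_space_1)
  qed (simp add: sets_P2 assms)
  ultimately show ?thesis
    by (simp add: couplings_def)
qed

lemma distr_Pair_in_couplings:
  fixes a b :: "'c \<Rightarrow> 'a::metric_space"
  assumes "compact (UNIV :: 'a set)" "a \<in> borel_measurable M" "b \<in> borel_measurable M"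
  shows "distr M borel (\<lambda>x. (a x, b x)) \<in> couplings (distr M borel a) (distr M borel b)"
    and "quad_cost (distr M borel (\<lambda>x. (a x, b x))) = (\<integral>x. (dist (a x) (b x))\<^sup>2 \<partial>M)"
proof -
  have ab: "(\<lambda>x. (a x, b x)) \<in> borel_measurable M"
    by (rule borel_measurable_Pair_compact[OF assms(1,1,2,3)])
  from fst_snd_borel_measurable[THEN distr_distr, OF ab] show
    "distr M borel (\<lambda>x. (a x, b x)) \<in> couplings (distr M borel a) (distr M borel b)"
    by (simp add: couplings_def comp_def)
  have "(\<lambda>p::'a \<times> 'a. (dist (fst p) (snd p))\<^sup>2) \<in> borel_measurable borel"
    by (intro borel_measurable_continuous_onI continuous_intros)
  with ab show "quad_cost (distr M borel (\<lambda>x. (a x, b x))) = (\<integral>x. (dist (a x) (b x))\<^sup>2 \<partial>M)"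
    unfolding quad_cost_def by (subst integral_distr) simp_all
qed

lemma integrable_dist_power2:
  fixes a b :: "'c \<Rightarrow> 'a::metric_space"
  assumes "compact (UNIV :: 'a set)" "prob_space M" "a \<in> borel_measurable M" "b \<in> borel_measurable M"
    and "\<And>x y :: 'a. dist x y \<le> D"
  shows "integrable M (\<lambda>x. (dist (a x) (b x))\<^sup>2)"
  using borel_measurable_dist_compact[OF assms(1,3,4)] assms(5)
  by (intro finite_measure.integrable_const_bound[where B="D\<^sup>2"] prob_space.finite_measure[OF assms(2)])
    (auto intro!: power_mono)

lemma W2_distr_le:
  fixes a b :: "'c \<Rightarrow> 'a::metric_space"
  assumes "compact (UNIV :: 'a set)" "prob_space M" "a \<in> borel_measurable M" "b \<in> borel_measurable M"
    and close: "\<And>x. x \<in> space M \<Longrightarrow> dist (a x) (b x) \<le> e"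
  shows "W2 (distr M borel a) (distr M borel b) \<le> e"
proof -
  interpret prob_space M by fact
  have e: "0 \<le> e"
    using close not_empty zero_le_dist order_trans by blast
  have "W2 (distr M borel a) (distr M borel b) \<le> sqrt (\<integral>x. (dist (a x) (b x))\<^sup>2 \<partial>M)"
    using W2_le_quad_cost[OF distr_Pair_in_couplings(1)[OF assms(1,3,4)]]
    by (simp add: distr_Pair_in_couplings(2)[OF assms(1,3,4)])
  also have "(\<integral>x. (dist (a x) (b x))\<^sup>2 \<partial>M) \<le> e\<^sup>2"
  proof (rule integral_le_const)
    show "integrable M (\<lambda>x. (dist (a x) (b x))\<^sup>2)"
      using borel_measurable_dist_compact[OF assms(1,3,4)] close
      by (intro integrable_const_bound[where B="e\<^sup>2"]) (auto intro!: power_mono)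
    show "AE x in M. (dist (a x) (b x))\<^sup>2 \<le> e\<^sup>2"
      using close by (auto intro!: power_mono)
  qed
  finally show ?thesis
    using e by (simp add: real_sqrt_le_mono order_trans)
qed

section \<open>Push-forward along an approximate isometry\<close>

lemma power2_le_power2_add:
  fixes s t D e :: real
  assumes "0 \<le> s" "0 \<le> t" "s \<le> D" "t \<le> D" "s \<le> t + e" "0 \<le> e"
  shows "s\<^sup>2 \<le> t\<^sup>2 + 2 * D * e"
proof (cases "s \<le> t")
  case True
  then show ?thesis
    using assms by (simp add: power_mono add_increasing2)
next
  case False
  have "s\<^sup>2 - t\<^sup>2 = (s - t) * (s + t)"
    by (simp add: power2_eq_square algebra_simps)
  also have "\<dots> \<le> e * (2 * D)"
    using assms False by (intro mult_mono) auto
  finally show ?thesis by (simp add: algebra_simps)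
qed

lemma integrable_coupling_cost:
  assumes "\<pi> \<in> couplings \<mu> \<nu>" "\<mu> \<in> P2" "\<And>x y :: 'a::metric_space. dist x y \<le> D"
  shows "integrable \<pi> (\<lambda>p. (dist (fst p) (snd p :: 'a))\<^sup>2)"
proof -
  have "(\<lambda>p::'a \<times> 'a. (dist (fst p) (snd p))\<^sup>2) \<in> borel_measurable \<pi>"
    unfolding measurable_cong_sets[OF sets_coupling[OF assms(1)] refl]
    by (intro borel_measurable_continuous_onI continuous_intros)
  then show ?thesis
    using assms(3) prob_space.finite_measure[OF P2_prob_space[OF coupling_in_P2[OF assms(1,2)]]]
    by (intro finite_measure.integrable_const_bound[where B="D\<^sup>2"]) (auto intro!: power_mono)
qed

lemma quad_cost_push_coupling_le:
  fixes f :: "'a::metric_space \<Rightarrow> 'b::metric_space"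
  assumes cptB: "compact (UNIV :: 'b set)" and f: "f \<in> borel_measurable borel"
    and expand: "\<And>x x'. dist (f x) (f x') \<le> dist x x' + \<epsilon>" and "0 \<le> \<epsilon>"
    and DX: "\<And>x x' :: 'a. dist x x' \<le> D" and DY: "\<And>y y' :: 'b. dist y y' \<le> D"
    and \<mu>: "\<mu> \<in> P2" and \<pi>: "\<pi> \<in> couplings \<mu> \<nu>"
  shows "\<exists>\<pi>'\<in>couplings (push f \<mu>) (push f \<nu>). quad_cost \<pi>' \<le> quad_cost \<pi> + 2 * D * \<epsilon>"
proof -
  interpret prob_space \<pi>
    using P2_prob_space[OF coupling_in_P2[OF \<pi> \<mu>]] .
  note fst = fst_snd_measurable_coupling(1)[OF \<pi>] and snd = fst_snd_measurable_coupling(2)[OF \<pi>]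
  have f_fst: "(\<lambda>p. f (fst p)) \<in> borel_measurable \<pi>" and f_snd: "(\<lambda>p. f (snd p)) \<in> borel_measurable \<pi>"
    using measurable_comp[OF fst f] measurable_comp[OF snd f] by (simp_all add: comp_def)
  have "distr \<pi> borel (\<lambda>p. f (fst p)) = push f \<mu>" "distr \<pi> borel (\<lambda>p. f (snd p)) = push f \<nu>"
    using distr_distr[OF f fst] distr_distr[OF f snd] \<pi> by (simp_all add: push_def couplings_def comp_def)
  with distr_Pair_in_couplings[OF cptB f_fst f_snd]
  have "distr \<pi> borel (\<lambda>p. (f (fst p), f (snd p))) \<in> couplings (push f \<mu>) (push f \<nu>)"
    and "quad_cost (distr \<pi> borel (\<lambda>p. (f (fst p), f (snd p)))) =
      (\<integral>p. (dist (f (fst p)) (f (snd p)))\<^sup>2 \<partial>\<pi>)"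
    by simp_all
  moreover have "(\<integral>p. (dist (f (fst p)) (f (snd p)))\<^sup>2 \<partial>\<pi>) \<le> quad_cost \<pi> + 2 * D * \<epsilon>"
    unfolding quad_cost_def
  proof (rule integral_le_integral_add_const)
    show "integrable \<pi> (\<lambda>p. (dist (f (fst p)) (f (snd p)))\<^sup>2)"
      by (rule integrable_dist_power2[OF cptB prob_space_axioms f_fst f_snd DY])
    show "integrable \<pi> (\<lambda>p. (dist (fst p) (snd p))\<^sup>2)"
      by (rule integrable_coupling_cost[OF \<pi> \<mu> DX])
    show "(dist (f (fst p)) (f (snd p)))\<^sup>2 \<le> (dist (fst p) (snd p))\<^sup>2 + 2 * D * \<epsilon>" for p
      using expand assms(4) DX DY by (intro power2_le_power2_add) auto
  qed
  ultimately show ?thesis by force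
qed

lemma coupling_cell_sums:
  fixes k :: "'a::metric_space \<Rightarrow> nat"
  assumes \<pi>: "\<pi> \<in> couplings \<alpha> \<beta>" and \<alpha>: "\<alpha> \<in> P2"
    and k: "k \<in> measurable borel (count_space UNIV)" and kn: "\<And>y. k y < n"
  shows "(\<Sum>j<n. measure \<pi> ({y. k y = i} \<times> {y. k y = j})) = measure \<alpha> {y. k y = i}"
    and "(\<Sum>i<n. measure \<pi> ({y. k y = i} \<times> {y. k y = j})) = measure \<beta> {y. k y = j}"
proof -
  have fin: "finite_measure \<pi>"
    using P2_prob_space[OF coupling_in_P2[OF \<pi> \<alpha>]] by (rule prob_space.finite_measure)
  note fst = fst_snd_measurable_coupling(1)[OF \<pi>] and snd = fst_snd_measurable_coupling(2)[OF \<pi>]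
  have level: "{y. k y = i} \<in> sets borel" for i
    using k by measurable
  have k_fst: "(\<lambda>q. k (fst q)) \<in> measurable \<pi> (count_space UNIV)"
    and k_snd: "(\<lambda>q. k (snd q)) \<in> measurable \<pi> (count_space UNIV)"
    using measurable_comp[OF fst k] measurable_comp[OF snd k] by (simp_all add: comp_def)
  have "{y. k y = i} \<times> UNIV = fst -` {y. k y = i} \<inter> space \<pi>"
    "UNIV \<times> {y. k y = j} = snd -` {y. k y = j} \<inter> space \<pi>"
    by (auto simp: space_coupling[OF \<pi>])
  then have row: "{y. k y = i} \<times> UNIV \<in> sets \<pi>" and col: "UNIV \<times> {y. k y = j} \<in> sets \<pi>"
    using measurable_sets[OF fst level] measurable_sets[OF snd level] by simp_all
  have "{y. k y = i} \<times> {y. k y = j} = ({y. k y = i} \<times> UNIV) \<inter> {q\<in>space \<pi>. k (snd q) = j}" for j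
    by (auto simp: space_coupling[OF \<pi>])
  then have "(\<Sum>j<n. measure \<pi> ({y. k y = i} \<times> {y. k y = j})) = measure \<pi> ({y. k y = i} \<times> UNIV)"
    using kn by (simp add: measure_eq_sum_level_sets[OF fin k_snd _ row, of n])
  then show "(\<Sum>j<n. measure \<pi> ({y. k y = i} \<times> {y. k y = j})) = measure \<alpha> {y. k y = i}"
    using coupling_marginal_measure(1)[OF \<pi> level] by simp
  have "{y. k y = i} \<times> {y. k y = j} = (UNIV \<times> {y. k y = j}) \<inter> {q\<in>space \<pi>. k (fst q) = i}" for i
    by (auto simp: space_coupling[OF \<pi>])
  then have "(\<Sum>i<n. measure \<pi> ({y. k y = i} \<times> {y. k y = j})) = measure \<pi> (UNIV \<times> {y. k y = j})"
    using kn by (simp add: measure_eq_sum_level_sets[OF fin k_fst _ col, of n])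
  then show "(\<Sum>i<n. measure \<pi> ({y. k y = i} \<times> {y. k y = j})) = measure \<beta> {y. k y = j}"
    using coupling_marginal_measure(2)[OF \<pi> level] by simp
qed

lemma coupling_pullback_with_cell_masses:
  fixes f :: "'a::metric_space \<Rightarrow> 'b::metric_space" and k :: "'b \<Rightarrow> nat"
  assumes cptA: "compact (UNIV :: 'a set)" and f: "f \<in> borel_measurable borel"
    and k: "k \<in> measurable borel (count_space UNIV)" and kn: "\<And>y. k y < n"
    and \<mu>: "\<mu> \<in> P2" and \<nu>: "\<nu> \<in> P2" and \<pi>': "\<pi>' \<in> couplings (push f \<mu>) (push f \<nu>)"
  obtains \<pi> where "\<pi> \<in> couplings \<mu> \<nu>"
    "\<And>i j. i < n \<Longrightarrow> j < n \<Longrightarrow>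
      measure \<pi> ({x. k (f x) = i} \<times> {x. k (f x) = j}) = measure \<pi>' ({y. k y = i} \<times> {y. k y = j})"
proof -
  have kf: "(\<lambda>x. k (f x)) \<in> measurable \<alpha> (count_space UNIV)" if "\<alpha> \<in> P2" for \<alpha> :: "'a measure"
    unfolding measurable_cong_sets[OF sets_P2[OF that] refl]
    using measurable_comp[OF f k] by (simp add: comp_def)
  have push_level: "measure (push f \<alpha>) {y. k y = i} = measure \<alpha> {x\<in>space \<alpha>. k (f x) = i}"
    if "\<alpha> \<in> P2" for \<alpha> i
  proof -
    have "{y. k y = i} \<in> sets borel"
      using k by measurable
    then show ?thesis
      unfolding push_def by (subst measure_distr[OF borel_measurable_P2[OF that f]]) (auto intro!: arg_cong[where f="measure \<alpha>"])
  qed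
  let ?P = "\<lambda>i j. measure \<pi>' ({y. k y = i} \<times> {y. k y = j})"
  let ?\<pi> = "block_coupling \<mu> \<nu> (\<lambda>x. k (f x)) (\<lambda>x. k (f x)) ?P"
  have "(\<Sum>j<n. ?P i j) = measure \<mu> {x\<in>space \<mu>. k (f x) = i}" for i
    using coupling_cell_sums(1)[OF \<pi>' push_in_P2[OF f \<mu>] k kn] push_level[OF \<mu>] by simp
  moreover have "(\<Sum>i<n. ?P i j) = measure \<nu> {x\<in>space \<nu>. k (f x) = j}" for j
    using coupling_cell_sums(2)[OF \<pi>' push_in_P2[OF f \<mu>] k kn] push_level[OF \<nu>] by simp
  ultimately have block: "distr ?\<pi> \<mu> fst = \<mu>" "distr ?\<pi> \<nu> snd = \<nu>"
    "\<And>i j. i < n \<Longrightarrow> j < n \<Longrightarrow>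
      measure ?\<pi> ({x\<in>space \<mu>. k (f x) = i} \<times> {x\<in>space \<nu>. k (f x) = j}) = ?P i j"
    using \<mu> \<nu> kn
    by (intro block_coupling_fst[where n=n] block_coupling_snd[where n=n]
        measure_block_coupling_cell[where n=n] kf; simp add: P2_prob_space)+
  have "sets ?\<pi> = sets (borel :: ('a \<times> 'a) measure)"
    using sets_borel_prod_compact[OF cptA cptA] \<mu> \<nu>
    by (simp add: sets_P2 cong: sets_pair_measure_cong)
  moreover have "distr ?\<pi> borel fst = \<mu>" "distr ?\<pi> borel snd = \<nu>"
    using block(1,2) distr_cong[OF refl sets_P2[OF \<mu>]] distr_cong[OF refl sets_P2[OF \<nu>]] by metis+
  ultimately have "?\<pi> \<in> couplings \<mu> \<nu>"
    by (simp add: couplings_def)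
  with block(3) show ?thesis
    using that by (simp add: space_P2 \<mu> \<nu>)
qed

lemma quad_cost_le_net_cost:
  fixes f :: "'a::metric_space \<Rightarrow> 'b::metric_space" and k :: "'b \<Rightarrow> nat" and c :: "nat \<Rightarrow> 'b"
  assumes f: "f \<in> borel_measurable borel" and k: "k \<in> measurable borel (count_space UNIV)"
    and kc: "\<And>y. dist y (c (k y)) < \<epsilon>" and contract: "\<And>x x'. dist x x' \<le> dist (f x) (f x') + \<epsilon>"
    and DX: "\<And>x x' :: 'a. dist x x' \<le> D" and DY: "\<And>y y' :: 'b. dist y y' \<le> D"
    and \<mu>: "\<mu> \<in> P2" and \<pi>: "\<pi> \<in> couplings \<mu> \<nu>"
  shows "quad_cost \<pi> \<le> (\<integral>q. (dist (c (k (f (fst q)))) (c (k (f (snd q)))))\<^sup>2 \<partial>\<pi>) + 6 * D * \<epsilon>"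
  unfolding quad_cost_def
proof (rule prob_space.integral_le_integral_add_const[OF P2_prob_space[OF coupling_in_P2[OF \<pi> \<mu>]]])
  have kf: "(\<lambda>x. k (f x)) \<in> measurable borel (count_space UNIV)"
    using measurable_comp[OF f k] by (simp add: comp_def)
  have "(\<lambda>q. (dist (c (k (f (fst q)))) (c (k (f (snd q)))))\<^sup>2) \<in> borel_measurable \<pi>"
    using borel_measurable_cell_function[where G="\<lambda>i j. (dist (c i) (c j))\<^sup>2",
        OF measurable_comp[OF fst_snd_measurable_coupling(1)[OF \<pi>] kf]
           measurable_comp[OF fst_snd_measurable_coupling(2)[OF \<pi>] kf]]
    by (simp add: comp_def)
  then show "integrable \<pi> (\<lambda>q. (dist (c (k (f (fst q)))) (c (k (f (snd q)))))\<^sup>2)"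
    using DY prob_space.finite_measure[OF P2_prob_space[OF coupling_in_P2[OF \<pi> \<mu>]]]
    by (intro finite_measure.integrable_const_bound[where B="D\<^sup>2"]) (auto intro!: power_mono)
  show "integrable \<pi> (\<lambda>p. (dist (fst p) (snd p))\<^sup>2)"
    by (rule integrable_coupling_cost[OF \<pi> \<mu> DX])
  fix q :: "'a \<times> 'a"
  obtain x x' where q: "q = (x, x')" by fastforce
  have "dist x x' \<le> dist (c (k (f x))) (c (k (f x'))) + 3 * \<epsilon>"
    using contract[of x x'] kc[of "f x"] kc[of "f x'"]
      dist_triangle[of "f x" "f x'" "c (k (f x))"] dist_triangle[of "c (k (f x))" "f x'" "c (k (f x'))"]
    by (simp add: dist_commute)
  moreover have "0 \<le> \<epsilon>"
    using kc[of "f x"] by (meson zero_le_dist order_trans less_imp_le)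
  ultimately have "(dist x x')\<^sup>2 \<le> (dist (c (k (f x))) (c (k (f x'))))\<^sup>2 + 2 * D * (3 * \<epsilon>)"
    using DX DY by (intro power2_le_power2_add) auto
  then show "(dist (fst q) (snd q))\<^sup>2 \<le> (dist (c (k (f (fst q)))) (c (k (f (snd q)))))\<^sup>2 + 6 * D * \<epsilon>"
    by (simp add: q)
qed

lemma net_cost_le_quad_cost:
  fixes k :: "'b::metric_space \<Rightarrow> nat" and c :: "nat \<Rightarrow> 'b"
  assumes k: "k \<in> measurable borel (count_space UNIV)" and kc: "\<And>y. dist y (c (k y)) < \<epsilon>"
    and DY: "\<And>y y' :: 'b. dist y y' \<le> D" and \<alpha>: "\<alpha> \<in> P2" and \<pi>: "\<pi> \<in> couplings \<alpha> \<beta>"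
  shows "(\<integral>q. (dist (c (k (fst q))) (c (k (snd q))))\<^sup>2 \<partial>\<pi>) \<le> quad_cost \<pi> + 4 * D * \<epsilon>"
  unfolding quad_cost_def
proof (rule prob_space.integral_le_integral_add_const[OF P2_prob_space[OF coupling_in_P2[OF \<pi> \<alpha>]]])
  have "(\<lambda>q. (dist (c (k (fst q))) (c (k (snd q))))\<^sup>2) \<in> borel_measurable \<pi>"
    using borel_measurable_cell_function[where G="\<lambda>i j. (dist (c i) (c j))\<^sup>2",
        OF measurable_comp[OF fst_snd_measurable_coupling(1)[OF \<pi>] k]
           measurable_comp[OF fst_snd_measurable_coupling(2)[OF \<pi>] k]]
    by (simp add: comp_def)
  then show "integrable \<pi> (\<lambda>q. (dist (c (k (fst q))) (c (k (snd q))))\<^sup>2)"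
    using DY prob_space.finite_measure[OF P2_prob_space[OF coupling_in_P2[OF \<pi> \<alpha>]]]
    by (intro finite_measure.integrable_const_bound[where B="D\<^sup>2"]) (auto intro!: power_mono)
  show "integrable \<pi> (\<lambda>p. (dist (fst p) (snd p))\<^sup>2)"
    by (rule integrable_coupling_cost[OF \<pi> \<alpha> DY])
  fix q :: "'b \<times> 'b"
  obtain y y' where q: "q = (y, y')" by fastforce
  have "dist (c (k y)) (c (k y')) \<le> dist y y' + 2 * \<epsilon>"
    using kc[of y] kc[of y'] dist_triangle[of "c (k y)" "c (k y')" y]
      dist_triangle[of y "c (k y')" y'] by (simp add: dist_commute)
  moreover have "0 \<le> \<epsilon>"
    using kc[of y] by (meson zero_le_dist order_trans less_imp_le)
  ultimately have "(dist (c (k y)) (c (k y')))\<^sup>2 \<le> (dist y y')\<^sup>2 + 2 * D * (2 * \<epsilon>)"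
    using DY by (intro power2_le_power2_add) auto
  then show "(dist (c (k (fst q))) (c (k (snd q))))\<^sup>2 \<le> (dist (fst q) (snd q))\<^sup>2 + 4 * D * \<epsilon>"
    by (simp add: q)
qed

text \<open>Both couplings are compared with the cost of the net points of their cells, which is
  the same for both since they give the same mass to every pair of cells.\<close>

lemma quad_cost_pullback_coupling_le:
  fixes f :: "'a::metric_space \<Rightarrow> 'b::metric_space"
  assumes cptA: "compact (UNIV :: 'a set)" and cptB: "compact (UNIV :: 'b set)"
    and f: "f \<in> borel_measurable borel"
    and contract: "\<And>x x'. dist x x' \<le> dist (f x) (f x') + \<epsilon>" and "0 < \<epsilon>"
    and DX: "\<And>x x' :: 'a. dist x x' \<le> D" and DY: "\<And>y y' :: 'b. dist y y' \<le> D"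
    and \<mu>: "\<mu> \<in> P2" and \<nu>: "\<nu> \<in> P2" and \<pi>': "\<pi>' \<in> couplings (push f \<mu>) (push f \<nu>)"
  shows "\<exists>\<pi>\<in>couplings \<mu> \<nu>. quad_cost \<pi> \<le> quad_cost \<pi>' + 10 * D * \<epsilon>"
proof -
  obtain k :: "'b \<Rightarrow> nat" and n :: nat and c :: "nat \<Rightarrow> 'b"
    where kn: "\<And>y. k y < n" and kc: "\<And>y. dist y (c (k y)) < \<epsilon>"
      and k: "k \<in> measurable borel (count_space UNIV)"
    using compact_metric_net_index[OF cptB \<open>0 < \<epsilon>\<close>] by metis
  obtain \<pi> where \<pi>: "\<pi> \<in> couplings \<mu> \<nu>" and mass: "\<And>i j. i < n \<Longrightarrow> j < n \<Longrightarrow>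
      measure \<pi> ({x. k (f x) = i} \<times> {x. k (f x) = j}) = measure \<pi>' ({y. k y = i} \<times> {y. k y = j})"
    using coupling_pullback_with_cell_masses[OF cptA f k kn \<mu> \<nu> \<pi>'] by metis
  have fin: "finite_measure \<pi>" "finite_measure \<pi>'"
    using coupling_in_P2[OF \<pi> \<mu>] coupling_in_P2[OF \<pi>' push_in_P2[OF f \<mu>]]
    by (simp_all add: P2_prob_space prob_space.finite_measure)
  have kf: "(\<lambda>x. k (f x)) \<in> measurable borel (count_space UNIV)"
    using measurable_comp[OF f k] by (simp add: comp_def)
  have "quad_cost \<pi> \<le> (\<integral>q. (dist (c (k (f (fst q)))) (c (k (f (snd q)))))\<^sup>2 \<partial>\<pi>) + 6 * D * \<epsilon>"
    by (rule quad_cost_le_net_cost[OF f k kc contract DX DY \<mu> \<pi>])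
  also have "(\<integral>q. (dist (c (k (f (fst q)))) (c (k (f (snd q)))))\<^sup>2 \<partial>\<pi>) =
      (\<integral>q. (dist (c (k (fst q))) (c (k (snd q))))\<^sup>2 \<partial>\<pi>')"
  proof (rule integral_cell_function_eq[where G="\<lambda>i j. (dist (c i) (c j))\<^sup>2", OF fin])
    fix i j assume "i < n" "j < n"
    moreover have "{q\<in>space \<pi>. k (f (fst q)) = i \<and> k (f (snd q)) = j} = {x. k (f x) = i} \<times> {x. k (f x) = j}"
      "{q\<in>space \<pi>'. k (fst q) = i \<and> k (snd q) = j} = {y. k y = i} \<times> {y. k y = j}"
      by (auto simp: space_coupling[OF \<pi>] space_coupling[OF \<pi>'])
    ultimately show "measure \<pi> {q\<in>space \<pi>. k (f (fst q)) = i \<and> k (f (snd q)) = j} =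
        measure \<pi>' {q\<in>space \<pi>'. k (fst q) = i \<and> k (snd q) = j}"
      using mass by simp
  qed (use measurable_comp[OF fst_snd_measurable_coupling(1)[OF \<pi>] kf]
      measurable_comp[OF fst_snd_measurable_coupling(2)[OF \<pi>] kf]
      measurable_comp[OF fst_snd_measurable_coupling(1)[OF \<pi>'] k]
      measurable_comp[OF fst_snd_measurable_coupling(2)[OF \<pi>'] k] kn in \<open>simp_all add: comp_def\<close>)
  also have "\<dots> \<le> quad_cost \<pi>' + 4 * D * \<epsilon>"
    by (rule net_cost_le_quad_cost[OF k kc DY push_in_P2[OF f \<mu>] \<pi>'])
  finally show ?thesis
    using \<pi> by (intro bexI[of _ \<pi>]) simp_all
qed

lemma cINF_le_cINF_add:
  fixes g g' :: "_ \<Rightarrow> real"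
  assumes "B \<noteq> {}" "bdd_below (g ` A)" "\<And>b. b \<in> B \<Longrightarrow> \<exists>a\<in>A. g a \<le> g' b + c"
  shows "(INF a\<in>A. g a) \<le> (INF b\<in>B. g' b) + c"
proof -
  have "(INF a\<in>A. g a) - c \<le> (INF b\<in>B. g' b)"
  proof (rule cINF_greatest[OF assms(1)])
    fix b assume "b \<in> B"
    then obtain a where "a \<in> A" "g a \<le> g' b + c"
      using assms(3) by blast
    then show "(INF a\<in>A. g a) - c \<le> g' b"
      using cINF_lower[OF assms(2)] by fastforce
  qed
  then show ?thesis by simp
qed

lemma abs_sqrt_diff_le:
  fixes a b c :: real
  assumes "0 \<le> a" "0 \<le> b" "\<bar>a - b\<bar> \<le> c"
  shows "\<bar>sqrt a - sqrt b\<bar> \<le> sqrt c"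
proof -
  have "sqrt a \<le> sqrt b + sqrt c" if "0 \<le> b" "a \<le> b + c" "0 \<le> c" for a b :: real
    using real_sqrt_le_mono[OF that(2)] sqrt_add_le_add_sqrt[OF that(1,3)] by linarith
  from this[of b a] this[of a b] assms show ?thesis
    by (simp add: abs_le_iff)
qed

lemma W2_push_distortion:
  fixes f :: "'a::metric_space \<Rightarrow> 'b::metric_space"
  assumes cptA: "compact (UNIV :: 'a set)" and cptB: "compact (UNIV :: 'b set)"
    and f: "f \<in> borel_measurable borel"
    and approx: "\<And>x x'. \<bar>dist (f x) (f x') - dist x x'\<bar> \<le> \<epsilon>" and "0 < \<epsilon>"
    and DX: "\<And>x x' :: 'a. dist x x' \<le> D" and DY: "\<And>y y' :: 'b. dist y y' \<le> D"
    and \<mu>: "\<mu> \<in> P2" and \<nu>: "\<nu> \<in> P2"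
  shows "\<bar>W2 (push f \<mu>) (push f \<nu>) - W2 \<mu> \<nu>\<bar> \<le> sqrt (10 * D * \<epsilon>)"
proof -
  let ?I = "INF \<pi>\<in>couplings \<mu> \<nu>. quad_cost \<pi>"
  let ?I' = "INF \<pi>\<in>couplings (push f \<mu>) (push f \<nu>). quad_cost \<pi>"
  have ne: "couplings \<mu> \<nu> \<noteq> {}" "couplings (push f \<mu>) (push f \<nu>) \<noteq> {}"
    using pair_measure_in_couplings[OF cptA \<mu> \<nu>]
      pair_measure_in_couplings[OF cptB push_in_P2[OF f \<mu>] push_in_P2[OF f \<nu>]] by auto
  have "0 \<le> D"
    using DX order_trans[OF zero_le_dist] by blast
  have expand: "dist (f x) (f x') \<le> dist x x' + \<epsilon>" and contract: "dist x x' \<le> dist (f x) (f x') + \<epsilon>"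
    for x x'
    using approx[of x x'] by (simp_all add: abs_le_iff)
  have "?I' \<le> ?I + 10 * D * \<epsilon>"
  proof (rule cINF_le_cINF_add[OF ne(1) bdd_below_quad_cost])
    fix \<pi> assume "\<pi> \<in> couplings \<mu> \<nu>"
    then obtain \<pi>' where "\<pi>' \<in> couplings (push f \<mu>) (push f \<nu>)" "quad_cost \<pi>' \<le> quad_cost \<pi> + 2 * D * \<epsilon>"
      using quad_cost_push_coupling_le[OF cptB f expand _ DX DY \<mu>] \<open>0 < \<epsilon>\<close> by auto
    moreover have "2 * D * \<epsilon> \<le> 10 * D * \<epsilon>"
      using \<open>0 \<le> D\<close> \<open>0 < \<epsilon>\<close> by simp
    ultimately show "\<exists>\<pi>'\<in>couplings (push f \<mu>) (push f \<nu>). quad_cost \<pi>' \<le> quad_cost \<pi> + 10 * D * \<epsilon>"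
      by force
  qed
  moreover have "?I \<le> ?I' + 10 * D * \<epsilon>"
    using quad_cost_pullback_coupling_le[OF cptA cptB f contract \<open>0 < \<epsilon>\<close> DX DY \<mu> \<nu>]
    by (intro cINF_le_cINF_add[OF ne(2) bdd_below_quad_cost])
  moreover have "0 \<le> ?I" "0 \<le> ?I'"
    using ne by (auto intro!: cINF_greatest quad_cost_nonneg)
  ultimately show ?thesis
    unfolding W2_eq_INF_quad_cost by (intro abs_sqrt_diff_le) auto
qed

lemma W2_push_almost_surjective:
  fixes f :: "'a::metric_space \<Rightarrow> 'b::metric_space"
  assumes cptB: "compact (UNIV :: 'b set)" and f: "f \<in> borel_measurable borel"
    and dense: "\<And>y. \<exists>x. dist (f x) y \<le> \<epsilon>" and "0 < \<epsilon>" and \<nu>: "\<nu> \<in> P2"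
  shows "\<exists>\<mu>\<in>P2. W2 (push f \<mu>) \<nu> \<le> 2 * \<epsilon>"
proof -
  obtain k :: "'b \<Rightarrow> nat" and n :: nat and c :: "nat \<Rightarrow> 'b"
    where kc: "\<And>y. dist y (c (k y)) < \<epsilon>" and k: "k \<in> measurable borel (count_space UNIV)"
    using compact_metric_net_index[OF cptB \<open>0 < \<epsilon>\<close>] by metis
  have "\<forall>i. \<exists>x. dist (f x) (c i) \<le> \<epsilon>"
    using dense by blast
  then obtain x where x: "\<And>i. dist (f (x i)) (c i) \<le> \<epsilon>"
    by metis
  define g where "g y = x (k y)" for y
  have g: "g \<in> borel_measurable borel"
    unfolding g_def by (rule measurable_compose_countable[where f="\<lambda>i y. x i", OF _ k]) simp
  have "W2 (push f (push g \<nu>)) \<nu> = W2 (distr \<nu> borel (\<lambda>y. f (g y))) (distr \<nu> borel (\<lambda>y. y))"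
    using push_push[OF f g \<nu>] distr_id2[OF sets_P2[OF \<nu>, symmetric]] by simp
  also have "\<dots> \<le> 2 * \<epsilon>"
  proof (rule W2_distr_le[OF cptB P2_prob_space[OF \<nu>]])
    show "(\<lambda>y. f (g y)) \<in> borel_measurable \<nu>"
      using borel_measurable_P2[OF \<nu> measurable_comp[OF g f]] by (simp add: comp_def)
    show "(\<lambda>y. y) \<in> borel_measurable \<nu>"
      by (rule measurable_ident_sets[OF sets_P2[OF \<nu>]])
    show "dist (f (g y)) y \<le> 2 * \<epsilon>" for y
      using x[of "k y"] kc[of y] dist_triangle[of "f (g y)" y "c (k y)"] by (simp add: g_def dist_commute)
  qed
  finally show ?thesis
    using push_in_P2[OF g \<nu>] by blast
qed

lemma W2_push_intertwining_le:
  fixes f :: "'a::metric_space \<Rightarrow> 'b::metric_space"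
  assumes cptB: "compact (UNIV :: 'b set)" and f: "f \<in> borel_measurable borel"
    and u: "u \<in> borel_measurable borel" and v: "v \<in> borel_measurable borel"
    and close: "\<And>x. dist (u (f x)) (f (v x)) \<le> \<epsilon>" and \<mu>: "\<mu> \<in> P2"
  shows "W2 (push u (push f \<mu>)) (push f (push v \<mu>)) \<le> \<epsilon>"
  unfolding push_push[OF u f \<mu>] push_push[OF f v \<mu>]
  using measurable_comp[OF f u] measurable_comp[OF v f] close
  by (intro W2_distr_le[OF cptB P2_prob_space[OF \<mu>]]) (simp_all add: borel_measurable_P2[OF \<mu>] comp_def)

section \<open>The induced action on the Wasserstein space\<close>

lemma induced_hom_push:
  assumes "h \<in> induced_group G"
  obtains g where "g \<in> G" "h = push g" "induced_hom G \<theta> h = push (\<theta> g)"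
proof -
  let ?g = "SOME g. g \<in> G \<and> push g = h"
  have "\<exists>g. g \<in> G \<and> push g = h"
    using assms by (auto simp: induced_group_def)
  then have "?g \<in> G \<and> push ?g = h"
    by (rule someI_ex)
  then show ?thesis
    by (intro that[of ?g]) (simp_all add: induced_hom_def)
qed

lemma induced_hom_in_induced_group:
  assumes "\<theta> ` G \<subseteq> H" "h \<in> induced_group G"
  shows "induced_hom G \<theta> h \<in> induced_group H"
  using assms by (elim induced_hom_push) (auto simp: induced_group_def)

lemma W2_induced_hom_push_le:
  fixes f :: "'a::metric_space \<Rightarrow> 'b::metric_space"
  assumes cptB: "compact (UNIV :: 'b set)" and f: "f \<in> borel_measurable borel"
    and "G \<subseteq> Isom" "H \<subseteq> Isom" "\<theta> ` G \<subseteq> H"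
    and close: "\<And>g x. g \<in> G \<Longrightarrow> dist (\<theta> g (f x)) (f (g x)) \<le> \<epsilon>"
    and h: "h \<in> induced_group G" and \<mu>: "\<mu> \<in> P2"
  shows "W2 (induced_hom G \<theta> h (push f \<mu>)) (push f (h \<mu>)) \<le> \<epsilon>"
proof -
  from h obtain g where g: "g \<in> G" "h = push g" "induced_hom G \<theta> h = push (\<theta> g)"
    by (rule induced_hom_push)
  have "W2 (push (\<theta> g) (push f \<mu>)) (push f (push g \<mu>)) \<le> \<epsilon>"
    using g(1) assms(3-5) close \<mu>
    by (intro W2_push_intertwining_le[OF cptB f] Isom_borel_measurable) auto
  with g show ?thesis
    by simp
qed

lemma W2_push_induced_hom_le:
  fixes f :: "'a::metric_space \<Rightarrow> 'b::metric_space"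
  assumes cptB: "compact (UNIV :: 'b set)" and f: "f \<in> borel_measurable borel"
    and "G \<subseteq> Isom" "H \<subseteq> Isom" "\<psi> ` H \<subseteq> G"
    and close: "\<And>l x. l \<in> H \<Longrightarrow> dist (l (f x)) (f (\<psi> l x)) \<le> \<epsilon>"
    and l: "l \<in> induced_group H" and \<mu>: "\<mu> \<in> P2"
  shows "W2 (l (push f \<mu>)) (push f (induced_hom H \<psi> l \<mu>)) \<le> \<epsilon>"
proof -
  from l obtain g where g: "g \<in> H" "l = push g" "induced_hom H \<psi> l = push (\<psi> g)"
    by (rule induced_hom_push)
  have "W2 (push g (push f \<mu>)) (push f (push (\<psi> g) \<mu>)) \<le> \<epsilon>"
    using g(1) assms(3-5) close \<mu>
    by (intro W2_push_intertwining_le[OF cptB f] Isom_borel_measurable) auto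
  with g show ?thesis
    by simp
qed

lemma equivariant_approx_push:
  fixes GX :: "('a::metric_space \<Rightarrow> 'a) set" and GY :: "('b::metric_space \<Rightarrow> 'b) set"
  assumes cptA: "compact (UNIV :: 'a set)" and cptB: "compact (UNIV :: 'b set)"
    and GX: "GX \<subseteq> Isom" and GY: "GY \<subseteq> Isom" and f: "f \<in> borel_measurable borel"
    and approx: "equivariant_approx dist UNIV GX dist UNIV GY f \<theta> \<psi> \<epsilon>" and "0 < \<epsilon>"
    and DX: "\<And>x x' :: 'a. dist x x' \<le> D" and DY: "\<And>y y' :: 'b. dist y y' \<le> D"
  shows "equivariant_approx W2 P2 (induced_group GX) W2 P2 (induced_group GY)
           (push f) (induced_hom GX \<theta>) (induced_hom GY \<psi>) (sqrt (10 * D * \<epsilon>) + 2 * \<epsilon>)"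
proof -
  from approx have \<theta>: "\<theta> ` GX \<subseteq> GY" and \<psi>: "\<psi> ` GY \<subseteq> GX"
    and dist_f: "\<And>x x'. \<bar>dist (f x) (f x') - dist x x'\<bar> \<le> \<epsilon>"
    and dense: "\<And>y. \<exists>x. dist (f x) y \<le> \<epsilon>"
    and equiv_\<theta>: "\<And>g x. g \<in> GX \<Longrightarrow> dist (\<theta> g (f x)) (f (g x)) \<le> \<epsilon>"
    and equiv_\<psi>: "\<And>l x. l \<in> GY \<Longrightarrow> dist (l (f x)) (f (\<psi> l x)) \<le> \<epsilon>"
    unfolding equivariant_approx_def by auto
  have "0 \<le> D"
    using DX order_trans[OF zero_le_dist] by blast
  then have bounds: "sqrt (10 * D * \<epsilon>) \<le> sqrt (10 * D * \<epsilon>) + 2 * \<epsilon>"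
    "2 * \<epsilon> \<le> sqrt (10 * D * \<epsilon>) + 2 * \<epsilon>" "\<epsilon> \<le> sqrt (10 * D * \<epsilon>) + 2 * \<epsilon>"
    using \<open>0 < \<epsilon>\<close> by auto
  show ?thesis
    unfolding equivariant_approx_def
  proof (intro conjI ballI)
    show "push f ` P2 \<subseteq> P2"
      using push_in_P2[OF f] by blast
    show "induced_hom GX \<theta> ` induced_group GX \<subseteq> induced_group GY"
      using induced_hom_in_induced_group[OF \<theta>] by blast
    show "induced_hom GY \<psi> ` induced_group GY \<subseteq> induced_group GX"
      using induced_hom_in_induced_group[OF \<psi>] by blast
  next
    fix \<mu> \<nu> :: "'a measure" assume "\<mu> \<in> P2" "\<nu> \<in> P2"
    then show "\<bar>W2 (push f \<mu>) (push f \<nu>) - W2 \<mu> \<nu>\<bar> \<le> sqrt (10 * D * \<epsilon>) + 2 * \<epsilon>"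
      using W2_push_distortion[OF cptA cptB f dist_f \<open>0 < \<epsilon>\<close> DX DY] bounds(1) by (blast intro: order_trans)
  next
    fix \<nu> :: "'b measure" assume "\<nu> \<in> P2"
    then show "\<exists>\<mu>\<in>P2. W2 (push f \<mu>) \<nu> \<le> sqrt (10 * D * \<epsilon>) + 2 * \<epsilon>"
      using W2_push_almost_surjective[OF cptB f dense \<open>0 < \<epsilon>\<close>] bounds(2) by (blast intro: order_trans)
  next
    fix h and \<mu> :: "'a measure" assume "h \<in> induced_group GX" "\<mu> \<in> P2"
    then show "W2 (induced_hom GX \<theta> h (push f \<mu>)) (push f (h \<mu>)) \<le> sqrt (10 * D * \<epsilon>) + 2 * \<epsilon>"
      using W2_induced_hom_push_le[OF cptB f GX GY \<theta> equiv_\<theta>] bounds(3) by (blast intro: order_trans)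
  next
    fix l and \<mu> :: "'a measure" assume "l \<in> induced_group GY" "\<mu> \<in> P2"
    then show "W2 (l (push f \<mu>)) (push f (induced_hom GY \<psi> l \<mu>)) \<le> sqrt (10 * D * \<epsilon>) + 2 * \<epsilon>"
      using W2_push_induced_hom_le[OF cptB f GX GY \<psi> equiv_\<psi>] bounds(3) by (blast intro: order_trans)
  qed
qed

theorem lemma3p2:
  fixes GX :: "('a::metric_space \<Rightarrow> 'a) set" and GY :: "('b::metric_space \<Rightarrow> 'b) set"
  assumes "compact (UNIV :: 'a set)" and "compact (UNIV :: 'b set)"
    and "closed_isom_subgroup GX" and "closed_isom_subgroup GY"
  shows "\<exists>E :: real \<Rightarrow> real. (E \<longlongrightarrow> 0) (at_right 0) \<and>
           (\<forall>\<epsilon> (f :: 'a \<Rightarrow> 'b) \<theta> \<psi>.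
              \<epsilon> > 0 \<and> f \<in> borel_measurable borel \<and>
              equivariant_approx dist UNIV GX dist UNIV GY f \<theta> \<psi> \<epsilon> \<longrightarrow>
              equivariant_approx W2 P2 (induced_group GX) W2 P2 (induced_group GY)
                 (push f) (induced_hom GX \<theta>) (induced_hom GY \<psi>) (E \<epsilon>))"
proof -
  obtain DX DY where DX: "\<And>x x' :: 'a. dist x x' \<le> DX" and DY: "\<And>y y' :: 'b. dist y y' \<le> DY"
    using compact_metric_dist_bounded[OF assms(1)] compact_metric_dist_bounded[OF assms(2)] by metis
  define D where "D = max DX DY"
  have D: "dist x x' \<le> D" "dist y y' \<le> D" for x x' :: 'a and y y' :: 'b
    using DX[of x x'] DY[of y y'] by (simp_all add: D_def)
  have "((\<lambda>\<epsilon>. sqrt (10 * D * \<epsilon>) + 2 * \<epsilon>) \<longlongrightarrow> sqrt (10 * D * 0) + 2 * 0) (at_right 0)"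
    by (intro tendsto_intros)
  moreover have "GX \<subseteq> Isom" "GY \<subseteq> Isom"
    using assms(3,4) by (simp_all add: closed_isom_subgroup_def)
  ultimately show ?thesis
    using equivariant_approx_push[OF assms(1,2) _ _ _ _ _ D] by (intro exI[of _ "\<lambda>\<epsilon>. sqrt (10 * D * \<epsilon>) + 2 * \<epsilon>"]) auto
qed

end
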